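(* Let $m=m_n$ and $\delta=\delta_n>0$ satisfy $m^2/n\to0$ and $\delta^2 m/n\to0$ as $n\to\infty$, and fix $\varepsilon>0$. Define $\varphi_n:[1/4,3/4]\to\mathbb{R}$ by \[ \varphi_n(x) = h(x) + \frac{m(m+1)}{4n}\big(g(x) - \log 4\big) + \frac{m\delta^2}{n} f(x) + \frac{1}{2n} g(x), \] where $f(x) = ((1-2x)^2+\varepsilon)^{1/2}$, $g(x) = -\log(x(1-x))$ and $h(x) = -x\log x - (1-x)\log(1-x)$. Then for all sufficiently large $n$, $\varphi_n$ is strictly concave on $[1/4,3/4]$ and has a unique maximum at $x=1/2$. Moreover, $\varphi_n''$ converges uniformly to $h''$ on $[1/4,3/4]$ as $n\to\infty$. *)

theory Defs
  imports "HOL-Analysis.Analysis"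
begin

definition strictly_concave_on :: "real set \<Rightarrow> (real \<Rightarrow> real) \<Rightarrow> bool" where
  "strictly_concave_on S F \<longleftrightarrow>
     (\<forall>x\<in>S. \<forall>y\<in>S. \<forall>t::real. x \<noteq> y \<and> 0 < t \<and> t < 1 \<longrightarrow>
        F ((1 - t) * x + t * y) > (1 - t) * F x + t * F y)"

definition f_fun :: "real \<Rightarrow> real \<Rightarrow> real" where
  "f_fun \<epsilon> x = sqrt ((1 - 2 * x)^2 + \<epsilon>)"

definition g_fun :: "real \<Rightarrow> real" where
  "g_fun x = - ln (x * (1 - x))"

definition h_fun :: "real \<Rightarrow> real" where
  "h_fun x = - x * ln x - (1 - x) * ln (1 - x)"

definition phi :: "(nat \<Rightarrow> nat) \<Rightarrow> (nat \<Rightarrow> real) \<Rightarrow> real \<Rightarrow> nat \<Rightarrow> real \<Rightarrow> real" where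
  "phi m \<delta> \<epsilon> n x =
     h_fun x
     + real (m n * (m n + 1)) / (4 * real n) * (g_fun x - ln 4)
     + real (m n) * (\<delta> n)^2 / real n * f_fun \<epsilon> x
     + 1 / (2 * real n) * g_fun x"

end

theory Submission
  imports Defs
begin

(* Writing phi_n = h + a_n (g - ln 4) + b_n f + c_n g, all three coefficients tend to 0, while g''
   and f'' are bounded on [1/4, 3/4]. Hence phi_n'' converges uniformly to h'' = -1/(x(1-x)) <= -4,
   so eventually phi_n'' <= -3, which makes phi_n strictly concave. Since phi_n is symmetric under
   x |-> 1 - x, strict concavity puts its unique maximum at 1/2. *)

lemma strictly_concave_onI_deriv2:
  fixes F :: "real \<Rightarrow> real"
  assumes "convex C"
    and F': "\<And>x. x \<in> C \<Longrightarrow> (F has_real_derivative F' x) (at x)"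
    and F'': "\<And>x. x \<in> C \<Longrightarrow> (F' has_real_derivative F'' x) (at x)"
    and "0 < k" and F''_le: "\<And>x. x \<in> C \<Longrightarrow> F'' x \<le> - k"
  shows "strictly_concave_on C F"
  unfolding strictly_concave_on_def
proof (intro ballI allI impI)
  fix x y t :: real
  assume "x \<in> C" "y \<in> C" and xyt: "x \<noteq> y \<and> 0 < t \<and> t < 1"
  define G where "G z = F z + k / 2 * z^2" for z
  have "concave_on C G"
    unfolding G_def
    by (rule f''_le0_imp_concave[OF \<open>convex C\<close>, where f' = "\<lambda>z. F' z + k * z"
          and f'' = "\<lambda>z. F'' z + k"])
       (auto intro!: derivative_eq_intros F' F'' dest: F''_le)
  then have "(1 - t) * G x + t * G y \<le> G ((1 - t) * x + t * y)"
    using concave_onD[OF \<open>concave_on C G\<close>, of t x y] \<open>x \<in> C\<close> \<open>y \<in> C\<close> xyt by simp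
  moreover have "G ((1 - t) * x + t * y) - ((1 - t) * G x + t * G y) =
      F ((1 - t) * x + t * y) - ((1 - t) * F x + t * F y) - k / 2 * (t * (1 - t) * (x - y)^2)"
    unfolding G_def by (simp add: power2_eq_square field_simps)
  moreover have "0 < k / 2 * (t * (1 - t) * (x - y)^2)"
    using xyt \<open>0 < k\<close> by simp
  ultimately show "(1 - t) * F x + t * F y < F ((1 - t) * x + t * y)"
    by linarith
qed

lemma strictly_concave_on_reflect_less:
  assumes "strictly_concave_on S F" "x \<in> S" "2 * c - x \<in> S"
    and "F (2 * c - x) = F x" "x \<noteq> c"
  shows "F x < F c"
proof -
  have midpoint: "(1 - 1/2) * x + 1/2 * (2 * c - x) = c" by (simp add: field_simps)
  have "x \<noteq> 2 * c - x" using assms(5) by simp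
  then have "(1 - 1/2) * F x + 1/2 * F (2 * c - x) < F c"
    using assms(1)[unfolded strictly_concave_on_def, rule_format, of x "2 * c - x" "1/2"] assms(2,3)
    unfolding midpoint by simp
  then show ?thesis using assms(4) by simp
qed

lemma deriv2_eqI:
  assumes "open S" "x \<in> S"
    and "\<And>y. y \<in> S \<Longrightarrow> (F has_real_derivative F' y) (at y)"
    and "(F' has_real_derivative F'' x) (at x)"
  shows "deriv (deriv F) x = F'' x"
proof -
  have "(deriv F has_real_derivative F'' x) (at x)"
    by (rule has_field_derivative_transform_within_open[OF assms(4) assms(1,2)])
       (auto intro!: DERIV_imp_deriv[symmetric] assms(3))
  then show ?thesis by (rule DERIV_imp_deriv)
qed

lemma uniform_limit_vanishing_mult:
  fixes a :: "'a \<Rightarrow> real"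
  assumes "(a \<longlongrightarrow> 0) F" "bounded (G ` S)"
  shows "uniform_limit S (\<lambda>n x. a n * G x) (\<lambda>_. 0) F"
proof -
  have "uniform_limit S (\<lambda>n _. a n) (\<lambda>_. 0) F"
    using assms(1) by (auto intro!: uniform_limitI dest: tendstoD)
  moreover have "bounded ((\<lambda>_. 0::real) ` S)"
    by (rule bounded_subset[of "{0}"]) auto
  ultimately have "uniform_limit S (\<lambda>n x. a n * G x) (\<lambda>x. 0 * G x) F"
    using assms(2) by (rule uniform_lim_mult[OF _ uniform_limit_const])
  then show ?thesis by simp
qed

lemma uniform_limit_eventually_less_add:
  fixes f :: "'a \<Rightarrow> 'b \<Rightarrow> real"
  assumes "uniform_limit S f l F" "0 < e"
  shows "\<forall>\<^sub>F n in F. \<forall>x\<in>S. f n x < l x + e"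
  using uniform_limitD[OF assms] by eventually_elim (auto simp: dist_real_def)

lemma tendsto_m_times_succ_over_n:
  assumes "(\<lambda>n. real (m n) ^ 2 / real n) \<longlonglongrightarrow> 0"
  shows "(\<lambda>n. real (m n * (m n + 1)) / (4 * real n)) \<longlonglongrightarrow> 0"
proof (rule tendsto_sandwich[OF _ _ tendsto_const])
  have "real (m n * (m n + 1)) / (4 * real n) \<le> real (m n) ^ 2 / real n / 2" for n
  proof -
    have "real (m n * (m n + 1)) \<le> 2 * real (m n) ^ 2"
      by (cases "m n") (auto simp: power2_eq_square algebra_simps)
    then have "real (m n * (m n + 1)) / (4 * real n) \<le> 2 * real (m n) ^ 2 / (4 * real n)"
      by (rule divide_right_mono) simp
    then show ?thesis by simp
  qed
  then show "\<forall>\<^sub>F n in sequentially. real (m n * (m n + 1)) / (4 * real n) \<le> real (m n) ^ 2 / real n / 2"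
    by simp
  show "(\<lambda>n. real (m n) ^ 2 / real n / 2) \<longlonglongrightarrow> 0"
    using tendsto_divide[OF assms tendsto_const, of 2] by simp
qed simp

definition h_fun' :: "real \<Rightarrow> real" where
  "h_fun' x = ln (1 - x) - ln x"

definition h_fun'' :: "real \<Rightarrow> real" where
  "h_fun'' x = - 1 / (x * (1 - x))"

definition g_fun' :: "real \<Rightarrow> real" where
  "g_fun' x = 1 / (1 - x) - 1 / x"

definition g_fun'' :: "real \<Rightarrow> real" where
  "g_fun'' x = 1 / (1 - x)^2 + 1 / x^2"

definition f_fun' :: "real \<Rightarrow> real \<Rightarrow> real" where
  "f_fun' \<epsilon> x = - 2 * (1 - 2 * x) / sqrt ((1 - 2 * x)^2 + \<epsilon>)"

definition f_fun'' :: "real \<Rightarrow> real \<Rightarrow> real" where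
  "f_fun'' \<epsilon> x = 4 * \<epsilon> / sqrt ((1 - 2 * x)^2 + \<epsilon>) ^ 3"

lemma h_fun_has_real_derivative:
  "0 < x \<Longrightarrow> x < 1 \<Longrightarrow> (h_fun has_real_derivative h_fun' x) (at x)"
  unfolding h_fun_def h_fun'_def
  by (rule derivative_eq_intros refl | simp add: field_simps)+

lemma h_fun'_has_real_derivative:
  "0 < x \<Longrightarrow> x < 1 \<Longrightarrow> (h_fun' has_real_derivative h_fun'' x) (at x)"
  unfolding h_fun'_def [abs_def] h_fun''_def
  by (rule derivative_eq_intros refl | simp add: field_simps)+

lemma g_fun_has_real_derivative:
  "0 < x \<Longrightarrow> x < 1 \<Longrightarrow> (g_fun has_real_derivative g_fun' x) (at x)"
  unfolding g_fun_def [abs_def] g_fun'_def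
  by (rule derivative_eq_intros refl | simp add: field_simps)+

lemma g_fun'_has_real_derivative:
  "0 < x \<Longrightarrow> x < 1 \<Longrightarrow> (g_fun' has_real_derivative g_fun'' x) (at x)"
  unfolding g_fun'_def [abs_def] g_fun''_def
  by (rule derivative_eq_intros refl | simp)+ (simp add: field_simps power2_eq_square)

lemma f_fun_radicand_pos: "0 < \<epsilon> \<Longrightarrow> 0 < (1 - 2 * x)^2 + (\<epsilon>::real)"
  by (simp add: add_nonneg_pos)

lemma f_fun_has_real_derivative:
  assumes "0 < \<epsilon>"
  shows "(f_fun \<epsilon> has_real_derivative f_fun' \<epsilon> x) (at x)"
proof -
  have "0 < (1 - 2 * x)^2 + \<epsilon>" using assms by (rule f_fun_radicand_pos)
  then show ?thesis
    unfolding f_fun_def [abs_def] f_fun'_def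
    by (auto intro!: derivative_eq_intros simp: field_simps)
qed

lemma f_fun'_has_real_derivative:
  assumes "0 < \<epsilon>"
  shows "(f_fun' \<epsilon> has_real_derivative f_fun'' \<epsilon> x) (at x)"
proof -
  have "0 < (1 - 2 * x)^2 + \<epsilon>" using assms by (rule f_fun_radicand_pos)
  then show ?thesis
    unfolding f_fun'_def [abs_def] f_fun''_def
    by (auto intro!: derivative_eq_intros simp: field_simps power3_eq_cube power2_eq_square)
qed

lemma h_fun''_le: "0 < x \<Longrightarrow> x < 1 \<Longrightarrow> h_fun'' x \<le> -4"
proof -
  assume "0 < x" "x < 1"
  then have "0 < x * (1 - x)" by simp
  moreover have "x * (1 - x) \<le> 1/4"
    using zero_le_power2[of "x - 1/2"] by (simp add: power2_eq_square algebra_simps)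
  ultimately show ?thesis by (simp add: h_fun''_def field_simps)
qed

definition perturbed_entropy :: "real \<Rightarrow> real \<Rightarrow> real \<Rightarrow> real \<Rightarrow> real \<Rightarrow> real" where
  "perturbed_entropy a b c \<epsilon> x = h_fun x + a * (g_fun x - ln 4) + b * f_fun \<epsilon> x + c * g_fun x"

definition perturbed_entropy' :: "real \<Rightarrow> real \<Rightarrow> real \<Rightarrow> real \<Rightarrow> real \<Rightarrow> real" where
  "perturbed_entropy' a b c \<epsilon> x = h_fun' x + a * g_fun' x + b * f_fun' \<epsilon> x + c * g_fun' x"

definition perturbed_entropy'' :: "real \<Rightarrow> real \<Rightarrow> real \<Rightarrow> real \<Rightarrow> real \<Rightarrow> real" where
  "perturbed_entropy'' a b c \<epsilon> x = h_fun'' x + a * g_fun'' x + b * f_fun'' \<epsilon> x + c * g_fun'' x"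

lemma phi_eq_perturbed_entropy:
  "phi m \<delta> \<epsilon> n = perturbed_entropy (real (m n * (m n + 1)) / (4 * real n))
     (real (m n) * (\<delta> n)^2 / real n) (1 / (2 * real n)) \<epsilon>"
  by (simp add: fun_eq_iff phi_def perturbed_entropy_def)

lemma perturbed_entropy_zero: "perturbed_entropy 0 0 0 \<epsilon> = h_fun"
  by (simp add: fun_eq_iff perturbed_entropy_def)

lemma perturbed_entropy''_zero: "perturbed_entropy'' 0 0 0 \<epsilon> = h_fun''"
  by (simp add: fun_eq_iff perturbed_entropy''_def)

lemma perturbed_entropy_reflect:
  "perturbed_entropy a b c \<epsilon> (1 - x) = perturbed_entropy a b c \<epsilon> x"
proof -
  have "h_fun (1 - x) = h_fun x" by (simp add: h_fun_def algebra_simps)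
  moreover have "g_fun (1 - x) = g_fun x" by (simp add: g_fun_def mult.commute)
  moreover have "f_fun \<epsilon> (1 - x) = f_fun \<epsilon> x" by (simp add: f_fun_def power2_eq_square algebra_simps)
  ultimately show ?thesis by (simp add: perturbed_entropy_def)
qed

lemma perturbed_entropy_has_real_derivative:
  "0 < x \<Longrightarrow> x < 1 \<Longrightarrow> 0 < \<epsilon> \<Longrightarrow>
    (perturbed_entropy a b c \<epsilon> has_real_derivative perturbed_entropy' a b c \<epsilon> x) (at x)"
  unfolding perturbed_entropy_def [abs_def] perturbed_entropy'_def
  by (auto intro!: derivative_eq_intros h_fun_has_real_derivative g_fun_has_real_derivative
      f_fun_has_real_derivative)

lemma perturbed_entropy'_has_real_derivative:
  "0 < x \<Longrightarrow> x < 1 \<Longrightarrow> 0 < \<epsilon> \<Longrightarrow>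
    (perturbed_entropy' a b c \<epsilon> has_real_derivative perturbed_entropy'' a b c \<epsilon> x) (at x)"
  unfolding perturbed_entropy'_def [abs_def] perturbed_entropy''_def
  by (auto intro!: derivative_eq_intros h_fun'_has_real_derivative g_fun'_has_real_derivative
      f_fun'_has_real_derivative)

lemma deriv2_perturbed_entropy:
  assumes "0 < x" "x < 1" "0 < \<epsilon>"
  shows "deriv (deriv (perturbed_entropy a b c \<epsilon>)) x = perturbed_entropy'' a b c \<epsilon> x"
  using assms
  by (intro deriv2_eqI[where S = "{0<..<1}" and F' = "perturbed_entropy' a b c \<epsilon>"]
      perturbed_entropy_has_real_derivative
      perturbed_entropy'_has_real_derivative) auto

lemma uniform_limit_perturbed_entropy'':
  assumes "compact S" "S \<subseteq> {0<..<1}" "0 < \<epsilon>"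
    and "(a \<longlongrightarrow> 0) F" "(b \<longlongrightarrow> 0) F" "(c \<longlongrightarrow> 0) F"
  shows "uniform_limit S (\<lambda>n. perturbed_entropy'' (a n) (b n) (c n) \<epsilon>) h_fun'' F"
proof -
  have "(1 - 2 * x)^2 + \<epsilon> \<noteq> 0" for x
    using f_fun_radicand_pos[OF assms(3), of x] by simp
  then have "continuous_on S g_fun''" "continuous_on S (f_fun'' \<epsilon>)"
    using assms(2) unfolding g_fun''_def f_fun''_def
    by (auto intro!: continuous_intros)
  then have bounded: "bounded (g_fun'' ` S)" "bounded (f_fun'' \<epsilon> ` S)"
    using assms(1) by (auto intro: compact_imp_bounded compact_continuous_image)
  have "uniform_limit S (\<lambda>n x. h_fun'' x + a n * g_fun'' x + b n * f_fun'' \<epsilon> x + c n * g_fun'' x)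
      (\<lambda>x. h_fun'' x + 0 + 0 + 0) F"
    by (intro uniform_limit_add uniform_limit_const uniform_limit_vanishing_mult assms bounded)
  then show ?thesis
    by (simp add: perturbed_entropy''_def [abs_def])
qed

lemma perturbed_entropy_strictly_concave_max:
  assumes "0 < d" "0 < \<epsilon>" "0 < k"
    and le: "\<And>x. x \<in> {d..1-d} \<Longrightarrow> perturbed_entropy'' a b c \<epsilon> x \<le> - k"
  shows "strictly_concave_on {d..1-d} (perturbed_entropy a b c \<epsilon>)"
    and "\<And>x. x \<in> {d..1-d} \<Longrightarrow> x \<noteq> 1/2 \<Longrightarrow>
      perturbed_entropy a b c \<epsilon> x < perturbed_entropy a b c \<epsilon> (1/2)"
proof -
  have inner: "0 < x" "x < 1" if "x \<in> {d..1-d}" for x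
    using that \<open>0 < d\<close> by auto
  show concave: "strictly_concave_on {d..1-d} (perturbed_entropy a b c \<epsilon>)"
    by (rule strictly_concave_onI_deriv2[where F' = "perturbed_entropy' a b c \<epsilon>",
          OF convex_real_interval(5) _ _ \<open>0 < k\<close> le])
       (simp_all add: perturbed_entropy_has_real_derivative perturbed_entropy'_has_real_derivative
         inner \<open>0 < \<epsilon>\<close>)
  fix x assume "x \<in> {d..1-d}" "x \<noteq> 1/2"
  then show "perturbed_entropy a b c \<epsilon> x < perturbed_entropy a b c \<epsilon> (1/2)"
    by (intro strictly_concave_on_reflect_less[OF concave]) (auto simp: perturbed_entropy_reflect)
qed

theorem lemma5p2:
  fixes m :: "nat \<Rightarrow> nat" and \<delta> :: "nat \<Rightarrow> real" and \<epsilon> :: real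
  assumes \<delta>_pos: "\<And>n. \<delta> n > 0"
    and m_lim: "(\<lambda>n. real (m n) ^ 2 / real n) \<longlonglongrightarrow> 0"
    and \<delta>_lim: "(\<lambda>n. (\<delta> n)^2 * real (m n) / real n) \<longlonglongrightarrow> 0"
    and \<epsilon>_pos: "\<epsilon> > 0"
  shows "(\<forall>\<^sub>F n in sequentially.
            strictly_concave_on {1/4..3/4} (phi m \<delta> \<epsilon> n) \<and>
            (\<forall>x\<in>{1/4..3/4::real}. x \<noteq> 1/2 \<longrightarrow> phi m \<delta> \<epsilon> n x < phi m \<delta> \<epsilon> n (1/2)))
       \<and> uniform_limit {1/4..3/4} (\<lambda>n x. deriv (deriv (phi m \<delta> \<epsilon> n)) x)
            (deriv (deriv h_fun)) sequentially"
proof -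
  define a where "a n = real (m n * (m n + 1)) / (4 * real n)" for n
  define b where "b n = real (m n) * (\<delta> n)^2 / real n" for n
  define c where "c n = 1 / (2 * real n)" for n
  have phi: "phi m \<delta> \<epsilon> n = perturbed_entropy (a n) (b n) (c n) \<epsilon>" for n
    by (simp add: a_def b_def c_def phi_eq_perturbed_entropy)
  have "a \<longlonglongrightarrow> 0" using tendsto_m_times_succ_over_n[OF m_lim] by (simp add: a_def [abs_def])
  moreover have "b \<longlonglongrightarrow> 0" using \<delta>_lim by (simp add: b_def [abs_def] mult.commute)
  moreover have "c \<longlonglongrightarrow> 0" using lim_const_over_n[of "1/2"] by (simp add: c_def [abs_def])
  ultimately have unif: "uniform_limit {1/4..3/4}
      (\<lambda>n. perturbed_entropy'' (a n) (b n) (c n) \<epsilon>) h_fun'' sequentially"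
    using \<epsilon>_pos by (intro uniform_limit_perturbed_entropy'') auto
  have "\<forall>\<^sub>F n in sequentially. \<forall>x\<in>{1/4..3/4}.
      perturbed_entropy'' (a n) (b n) (c n) \<epsilon> x < h_fun'' x + 1"
    by (rule uniform_limit_eventually_less_add[OF unif]) simp
  then have "\<forall>\<^sub>F n in sequentially.
            strictly_concave_on {1/4..3/4} (phi m \<delta> \<epsilon> n) \<and>
            (\<forall>x\<in>{1/4..3/4::real}. x \<noteq> 1/2 \<longrightarrow> phi m \<delta> \<epsilon> n x < phi m \<delta> \<epsilon> n (1/2))"
  proof eventually_elim
    case (elim n)
    then have "perturbed_entropy'' (a n) (b n) (c n) \<epsilon> x \<le> -3" if "x \<in> {1/4..3/4}" for x
      using that h_fun''_le[of x] by force
    then show ?case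
      using perturbed_entropy_strictly_concave_max[of "1/4" \<epsilon> 3] \<epsilon>_pos by (simp add: phi)
  qed
  moreover have "uniform_limit {1/4..3/4} (\<lambda>n x. deriv (deriv (phi m \<delta> \<epsilon> n)) x)
      (deriv (deriv h_fun)) sequentially"
    using unif \<epsilon>_pos
    by (subst uniform_limit_cong') (auto simp: phi deriv2_perturbed_entropy
        perturbed_entropy_zero[symmetric, of \<epsilon>] perturbed_entropy''_zero[symmetric, of \<epsilon>])
  ultimately show ?thesis ..
qed

end
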